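(* Let $T$ be a tree (without loops) and $e=uv$ an edge of $T$. Then $\nu_2(T)-\nu_2(T\setminus e)\in\{0,1\}$; moreover $\nu_2(T)-\nu_2(T\setminus e)=0$ if and only if $u$ or $v$ is saturated in $T\setminus e$, and $\nu_2(T)-\nu_2(T\setminus e)=1$ if and only if $e$ is saturated in $T$.
   Context: A $2$-matching of a graph $G$ is a set of edges such that every vertex is incident to at most two of them; $\nu_2(G)$ is the maximum size of a $2$-matching and a $2$-matching of that size is called maximum. A vertex $w$ is saturated in $G$ if every maximum $2$-matching of $G$ has exactly two edges incident to $w$; an edge is saturated in $G$ if it belongs to every maximum $2$-matching of $G$. $T\setminus e$ denotes $T$ with the edge $e$ deleted (a forest). *)

theory Defs
  imports Main
begin

definition is_graph :: "'a set \<Rightarrow> 'a set set \<Rightarrow> bool" where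
  "is_graph V E \<longleftrightarrow> finite V \<and> (\<forall>e\<in>E. \<exists>x y. x \<noteq> y \<and> x \<in> V \<and> y \<in> V \<and> e = {x, y})"

definition adj :: "'a set set \<Rightarrow> 'a \<Rightarrow> 'a \<Rightarrow> bool" where
  "adj E x y \<longleftrightarrow> {x, y} \<in> E"

definition connected_graph :: "'a set \<Rightarrow> 'a set set \<Rightarrow> bool" where
  "connected_graph V E \<longleftrightarrow> (\<forall>x\<in>V. \<forall>y\<in>V. (adj E)\<^sup>*\<^sup>* x y)"

definition is_cycle :: "'a set \<Rightarrow> 'a set set \<Rightarrow> 'a list \<Rightarrow> bool" where
  "is_cycle V E cs \<longleftrightarrow> length cs \<ge> 3 \<and> distinct cs \<and> set cs \<subseteq> V \<and>
     (\<forall>i. Suc i < length cs \<longrightarrow> adj E (cs ! i) (cs ! Suc i)) \<and>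
     adj E (last cs) (hd cs)"

definition acyclic_graph :: "'a set \<Rightarrow> 'a set set \<Rightarrow> bool" where
  "acyclic_graph V E \<longleftrightarrow> \<not> (\<exists>cs. is_cycle V E cs)"

definition is_tree :: "'a set \<Rightarrow> 'a set set \<Rightarrow> bool" where
  "is_tree V E \<longleftrightarrow> is_graph V E \<and> V \<noteq> {} \<and> connected_graph V E \<and> acyclic_graph V E"

definition two_matching :: "'a set set \<Rightarrow> 'a set set \<Rightarrow> bool" where
  "two_matching E M \<longleftrightarrow> M \<subseteq> E \<and> (\<forall>w. card {e \<in> M. w \<in> e} \<le> 2)"

definition nu2 :: "'a set set \<Rightarrow> nat" where
  "nu2 E = Max {card M | M. two_matching E M}"

definition max_two_matching :: "'a set set \<Rightarrow> 'a set set \<Rightarrow> bool" where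
  "max_two_matching E M \<longleftrightarrow> two_matching E M \<and> card M = nu2 E"

definition saturated_vertex :: "'a set set \<Rightarrow> 'a \<Rightarrow> bool" where
  "saturated_vertex E w \<longleftrightarrow> (\<forall>M. max_two_matching E M \<longrightarrow> card {e \<in> M. w \<in> e} = 2)"

definition saturated_edge :: "'a set set \<Rightarrow> 'a set \<Rightarrow> bool" where
  "saturated_edge E f \<longleftrightarrow> (\<forall>M. max_two_matching E M \<longrightarrow> f \<in> M)"

end

theory Submission
  imports Defs
begin

text \<open>Removing the edge e = uv changes \<nu>2 by at most one, and it drops exactly when
  every maximum 2-matching uses e, i.e. when e is saturated. The drop happens iff some maximum
  2-matching of T - e leaves both u and v unsaturated (then e can be added). In a tree, u and v
  lie in different components of T - e, so a maximum 2-matching unsaturated at u and one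
  unsaturated at v can be spliced along the component of u into a single maximum 2-matching
  unsaturated at both; hence the drop happens iff neither u nor v is saturated in T - e.\<close>

abbreviation deg :: "'a set set \<Rightarrow> 'a \<Rightarrow> nat" where
  "deg M w \<equiv> card {f \<in> M. w \<in> f}"

lemma finite_two_matching: "finite E \<Longrightarrow> two_matching E M \<Longrightarrow> finite M"
  unfolding two_matching_def using finite_subset by blast

lemma deg_le_2: "two_matching E M \<Longrightarrow> deg M w \<le> 2"
  by (simp add: two_matching_def)

lemma finite_two_matching_cards:
  "finite E \<Longrightarrow> finite {card M | M. two_matching E M}"
  by (rule finite_subset[of _ "{..card E}"]) (auto simp: two_matching_def intro: card_mono)

lemma card_le_nu2: "finite E \<Longrightarrow> two_matching E M \<Longrightarrow> card M \<le> nu2 E"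
  unfolding nu2_def using finite_two_matching_cards by (auto intro: Max_ge)

lemma ex_max_two_matching:
  assumes "finite E" obtains M where "max_two_matching E M"
proof -
  have "two_matching E {}" by (simp add: two_matching_def)
  then have "{card M | M. two_matching E M} \<noteq> {}" by blast
  then have "nu2 E \<in> {card M | M. two_matching E M}"
    unfolding nu2_def using Max_in finite_two_matching_cards[OF assms] by blast
  then show thesis using that unfolding max_two_matching_def by auto
qed

lemma two_matching_mono: "E' \<subseteq> E \<Longrightarrow> two_matching E' M \<Longrightarrow> two_matching E M"
  unfolding two_matching_def by auto

lemma two_matching_Diff:
  assumes "finite E" "two_matching E M" shows "two_matching (E - {e}) (M - {e})"
proof -
  have "deg (M - {e}) w \<le> deg M w" for w
    using finite_two_matching[OF assms] by (intro card_mono) auto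
  then show ?thesis using assms(2) unfolding two_matching_def by (meson Diff_mono order.refl order_trans)
qed

lemma two_matching_insert:
  assumes "finite E" "two_matching (E - {{u,v}}) M" "{u,v} \<in> E"
    and "deg M u < 2" "deg M v < 2"
  shows "two_matching E (insert {u,v} M)"
proof -
  have "finite M" using finite_two_matching[OF _ assms(2)] assms(1) by simp
  have "deg (insert {u,v} M) w \<le> 2" for w
  proof (cases "w \<in> {u,v}")
    case True
    then have "{f \<in> insert {u,v} M. w \<in> f} = insert {u,v} {f \<in> M. w \<in> f}" by auto
    then have "deg (insert {u,v} M) w \<le> Suc (deg M w)"
      using \<open>finite M\<close> by (simp add: card_insert_if)
    then show ?thesis using True assms(4,5) by auto
  next
    case False
    then have "{f \<in> insert {u,v} M. w \<in> f} = {f \<in> M. w \<in> f}" by auto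
    then show ?thesis using assms(2) by (simp add: deg_le_2)
  qed
  then show ?thesis using assms(2,3) unfolding two_matching_def by auto
qed

lemma nu2_mono:
  assumes "finite E" "E' \<subseteq> E" shows "nu2 E' \<le> nu2 E"
proof -
  obtain M where "max_two_matching E' M"
    using ex_max_two_matching finite_subset[OF assms(2,1)] by blast
  then show ?thesis
    using card_le_nu2[OF assms(1)] two_matching_mono[OF assms(2)] by (metis max_two_matching_def)
qed

lemma nu2_le_nu2_Diff_Suc:
  assumes "finite E" shows "nu2 E \<le> Suc (nu2 (E - {e}))"
proof -
  obtain M where M: "max_two_matching E M" using ex_max_two_matching[OF assms] .
  then have "finite M" using finite_two_matching[OF assms] by (simp add: max_two_matching_def)
  then have "card M \<le> Suc (card (M - {e}))"
    by (cases "e \<in> M") (auto simp: card_Suc_Diff1)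
  moreover have "card (M - {e}) \<le> nu2 (E - {e})"
    using M assms by (simp add: max_two_matching_def card_le_nu2 two_matching_Diff)
  ultimately show ?thesis using M by (simp add: max_two_matching_def)
qed

lemma saturated_edge_iff_nu2_Diff_less:
  assumes "finite E" shows "saturated_edge E e \<longleftrightarrow> nu2 (E - {e}) < nu2 E"
proof
  assume sat: "saturated_edge E e"
  obtain M where M: "max_two_matching (E - {e}) M" using ex_max_two_matching assms by blast
  then have "two_matching E M" "e \<notin> M"
    using two_matching_mono[of "E - {e}" E] by (auto simp: max_two_matching_def two_matching_def)
  then show "nu2 (E - {e}) < nu2 E"
    using sat M card_le_nu2[OF assms] unfolding saturated_edge_def max_two_matching_def
    by (metis le_neq_implies_less)
next
  assume less: "nu2 (E - {e}) < nu2 E"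
  show "saturated_edge E e" unfolding saturated_edge_def
  proof (intro allI impI)
    fix M assume M: "max_two_matching E M"
    show "e \<in> M"
    proof (rule ccontr)
      assume "e \<notin> M"
      with M have "two_matching (E - {e}) M" by (auto simp: max_two_matching_def two_matching_def)
      then show False using M less card_le_nu2[of "E - {e}" M] assms
        by (simp add: max_two_matching_def)
    qed
  qed
qed

lemma nu2_Diff_less_imp_unsaturated:
  assumes "finite E" "nu2 (E - {e}) < nu2 E" "w \<in> e"
  shows "\<not> saturated_vertex (E - {e}) w"
proof -
  obtain M where M: "max_two_matching E M" using ex_max_two_matching[OF assms(1)] .
  have "e \<in> M" using M assms saturated_edge_iff_nu2_Diff_less by (auto simp: saturated_edge_def)
  have "finite M" using M assms(1) finite_two_matching by (auto simp: max_two_matching_def)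
  have "max_two_matching (E - {e}) (M - {e})"
  proof -
    have "two_matching (E - {e}) (M - {e})"
      using M assms(1) two_matching_Diff by (auto simp: max_two_matching_def)
    moreover have "nu2 (E - {e}) \<le> card (M - {e})"
      using M assms(2) \<open>e \<in> M\<close> \<open>finite M\<close> by (simp add: max_two_matching_def)
    ultimately show ?thesis
      using card_le_nu2[of "E - {e}"] assms(1) by (simp add: max_two_matching_def le_antisym)
  qed
  moreover have "deg (M - {e}) w < 2"
  proof -
    have "{f \<in> M - {e}. w \<in> f} = {f \<in> M. w \<in> f} - {e}" by auto
    moreover have "e \<in> {f \<in> M. w \<in> f}" using \<open>e \<in> M\<close> assms(3) by simp
    ultimately show ?thesis
      using \<open>finite M\<close> deg_le_2[of E M w] M by (simp add: max_two_matching_def card_Diff_singleton)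
  qed
  ultimately show ?thesis unfolding saturated_vertex_def by force
qed

lemma unsaturated_ends_imp_nu2_Diff_less:
  assumes "finite E" "{u,v} \<in> E" "max_two_matching (E - {{u,v}}) M"
    and "deg M u < 2" "deg M v < 2"
  shows "nu2 (E - {{u,v}}) < nu2 E"
proof -
  have M: "two_matching (E - {{u,v}}) M" "card M = nu2 (E - {{u,v}})"
    using assms(3) by (auto simp: max_two_matching_def)
  have "{u,v} \<notin> M" using M(1) by (auto simp: two_matching_def)
  moreover have "finite M" using finite_two_matching[OF _ M(1)] assms(1) by simp
  moreover have "card (insert {u,v} M) \<le> nu2 E"
    using card_le_nu2[OF assms(1) two_matching_insert[OF assms(1) M(1) assms(2,4,5)]] .
  ultimately show ?thesis using M by simp
qed

lemma edge_in_component_or_disjoint: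
  fixes u :: 'a
  assumes "\<forall>f\<in>F. \<exists>x y. f = {x,y}" "f \<in> F"
  defines "C \<equiv> {w. (adj F)\<^sup>*\<^sup>* u w}"
  shows "f \<subseteq> C \<or> f \<inter> C = {}"
proof -
  obtain x y where f: "f = {x,y}" using assms by blast
  then have "adj F x y" "adj F y x" using assms(2) by (auto simp: adj_def insert_commute)
  then have "x \<in> C \<longleftrightarrow> y \<in> C" unfolding C_def by (auto intro: rtranclp.rtrancl_into_rtrancl)
  then show ?thesis using f by auto
qed

lemma two_matching_splice:
  assumes "two_matching F M1" "two_matching F M2" "\<forall>f\<in>F. f \<subseteq> C \<or> f \<inter> C = {}"
  defines "N \<equiv> (M1 \<inter> Pow C) \<union> (M2 - Pow C)"
  shows "two_matching F N" and "w \<in> C \<Longrightarrow> deg N w = deg M1 w"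
    and "w \<notin> C \<Longrightarrow> deg N w = deg M2 w"
proof -
  have MF: "M1 \<subseteq> F" "M2 \<subseteq> F" using assms(1,2) by (auto simp: two_matching_def)
  show in_C: "deg N w = deg M1 w" if "w \<in> C" for w
  proof -
    have "{f \<in> N. w \<in> f} = {f \<in> M1. w \<in> f}" using that MF assms(3) unfolding N_def by blast
    then show ?thesis by simp
  qed
  show out_C: "deg N w = deg M2 w" if "w \<notin> C" for w
  proof -
    have "{f \<in> N. w \<in> f} = {f \<in> M2. w \<in> f}" using that unfolding N_def by blast
    then show ?thesis by simp
  qed
  have "deg N w \<le> 2" for w
    using in_C out_C deg_le_2 assms(1,2) by (cases "w \<in> C") auto
  then show "two_matching F N" using MF unfolding N_def two_matching_def by blast
qed

lemma ex_max_two_matching_unsaturated_both: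
  assumes "finite F" "\<forall>f\<in>F. \<exists>x y. f = {x,y}" "\<not> (adj F)\<^sup>*\<^sup>* u v"
    and "\<not> saturated_vertex F u" "\<not> saturated_vertex F v"
  obtains N where "max_two_matching F N" "deg N u < 2" "deg N v < 2"
proof -
  obtain M1 where M1: "max_two_matching F M1" "deg M1 u \<noteq> 2"
    using assms(4) unfolding saturated_vertex_def by blast
  obtain M2 where M2: "max_two_matching F M2" "deg M2 v \<noteq> 2"
    using assms(5) unfolding saturated_vertex_def by blast
  have tm: "two_matching F M1" "two_matching F M2" "card M1 = nu2 F" "card M2 = nu2 F"
    using M1(1) M2(1) by (auto simp: max_two_matching_def)
  define C where "C = {w. (adj F)\<^sup>*\<^sup>* u w}"
  have "u \<in> C" "v \<notin> C" using assms(3) by (auto simp: C_def)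
  have closed: "\<forall>f\<in>F. f \<subseteq> C \<or> f \<inter> C = {}"
    using edge_in_component_or_disjoint[OF assms(2)] unfolding C_def by blast
  define N where "N = (M1 \<inter> Pow C) \<union> (M2 - Pow C)"
  define N' where "N' = (M2 \<inter> Pow C) \<union> (M1 - Pow C)"
  note N = two_matching_splice[OF tm(1,2) closed, folded N_def]
  note N' = two_matching_splice[OF tm(2,1) closed, folded N'_def]
  have fin: "finite M1" "finite M2" using finite_two_matching[OF assms(1)] tm(1,2) by auto
  \<comment> \<open>N and N' together use exactly the edges of M1 and M2, so neither can be smaller.\<close>
  have "card N = card (M1 \<inter> Pow C) + card (M2 - Pow C)"
    unfolding N_def using fin by (intro card_Un_disjoint) auto
  moreover have "card N' = card (M2 \<inter> Pow C) + card (M1 - Pow C)"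
    unfolding N'_def using fin by (intro card_Un_disjoint) auto
  moreover have "card M1 = card (M1 \<inter> Pow C) + card (M1 - Pow C)"
    "card M2 = card (M2 \<inter> Pow C) + card (M2 - Pow C)"
    using fin by (simp_all add: card_Int_Diff)
  moreover have "card N \<le> nu2 F" "card N' \<le> nu2 F"
    using card_le_nu2[OF assms(1)] N(1) N'(1) by auto
  ultimately have "max_two_matching F N"
    using N(1) tm(3,4) unfolding max_two_matching_def by linarith
  moreover have "deg N u < 2" "deg N v < 2"
    using N(2)[OF \<open>u \<in> C\<close>] N(3)[OF \<open>v \<notin> C\<close>] M1(2) M2(2)
      deg_le_2[OF tm(1), of u] deg_le_2[OF tm(2), of v] by simp_all
  ultimately show thesis by (rule that)
qed

lemma bridge_nu2_Diff_less_iff: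
  assumes "finite E" "\<forall>f\<in>E. \<exists>x y. f = {x,y}" "{u,v} \<in> E"
    and "\<not> (adj (E - {{u,v}}))\<^sup>*\<^sup>* u v"
  shows "nu2 (E - {{u,v}}) < nu2 E \<longleftrightarrow>
    \<not> saturated_vertex (E - {{u,v}}) u \<and> \<not> saturated_vertex (E - {{u,v}}) v"
proof
  assume "nu2 (E - {{u,v}}) < nu2 E"
  then show "\<not> saturated_vertex (E - {{u,v}}) u \<and> \<not> saturated_vertex (E - {{u,v}}) v"
    using nu2_Diff_less_imp_unsaturated[OF assms(1)] by simp
next
  assume unsat: "\<not> saturated_vertex (E - {{u,v}}) u \<and> \<not> saturated_vertex (E - {{u,v}}) v"
  have "finite (E - {{u,v}})" "\<forall>f\<in>E - {{u,v}}. \<exists>x y. f = {x,y}"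
    using assms(1,2) by auto
  then obtain N where "max_two_matching (E - {{u,v}}) N" "deg N u < 2" "deg N v < 2"
    using unsat by (elim ex_max_two_matching_unsaturated_both[OF _ _ assms(4)]) auto
  then show "nu2 (E - {{u,v}}) < nu2 E"
    by (rule unsaturated_ends_imp_nu2_Diff_less[OF assms(1,3)])
qed

lemma rtranclp_adj_obtains_path:
  assumes "(adj F)\<^sup>*\<^sup>* u z"
  obtains p where "p \<noteq> []" "hd p = u" "last p = z" "distinct p" "set p \<subseteq> insert u (\<Union>F)"
    "\<forall>i. Suc i < length p \<longrightarrow> adj F (p ! i) (p ! Suc i)"
  using assms
proof (induction arbitrary: thesis rule: rtranclp_induct)
  case base
  then show ?case by (auto intro: base[of "[u]"])
next
  case (step y z)
  obtain p where p: "p \<noteq> []" "hd p = u" "last p = y" "distinct p" "set p \<subseteq> insert u (\<Union>F)"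
    "\<forall>i. Suc i < length p \<longrightarrow> adj F (p ! i) (p ! Suc i)" using step.IH by blast
  show ?case
  proof (cases "z \<in> set p")
    case True
    then obtain k where k: "k < length p" "p ! k = z" by (auto simp: in_set_conv_nth)
    let ?q = "take (Suc k) p"
    have "last ?q = z" using k by (simp add: take_Suc_conv_app_nth)
    moreover have "?q \<noteq> []" "hd ?q = u" "distinct ?q" using p by simp_all
    moreover have "set ?q \<subseteq> insert u (\<Union>F)" using p(5) set_take_subset by fastforce
    moreover have "\<forall>i. Suc i < length ?q \<longrightarrow> adj F (?q ! i) (?q ! Suc i)" using p(6) by auto
    ultimately show ?thesis using step.prems by blast
  next
    case False
    have "\<forall>i. Suc i < length (p @ [z]) \<longrightarrow> adj F ((p @ [z]) ! i) ((p @ [z]) ! Suc i)"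
    proof (intro allI impI)
      fix i assume i: "Suc i < length (p @ [z])"
      show "adj F ((p @ [z]) ! i) ((p @ [z]) ! Suc i)"
      proof (cases "Suc i < length p")
        case True
        then show ?thesis using p(6) by (simp add: nth_append)
      next
        case False
        then have "Suc i = length p" using i by simp
        then have "p ! i = y" using p(1,3) by (metis diff_Suc_1 last_conv_nth)
        then show ?thesis using step.hyps(2) \<open>Suc i = length p\<close> by (simp add: nth_append)
      qed
    qed
    moreover have "z \<in> \<Union>F" using step.hyps(2) by (auto simp: adj_def)
    ultimately show ?thesis using p False by (intro step.prems[of "p @ [z]"]) auto
  qed
qed

lemma is_graph_finite_edges: "is_graph V E \<Longrightarrow> finite E"
  unfolding is_graph_def by (metis (no_types, lifting) Pow_iff finite_Pow_iff finite_subset insert_subset subsetI empty_subsetI)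

lemma tree_edge_is_bridge:
  assumes "is_tree V E" "{u,v} \<in> E"
  shows "\<not> (adj (E - {{u,v}}))\<^sup>*\<^sup>* u v"
proof
  assume "(adj (E - {{u,v}}))\<^sup>*\<^sup>* u v"
  then obtain p where p: "p \<noteq> []" "hd p = u" "last p = v" "distinct p"
    "set p \<subseteq> insert u (\<Union>(E - {{u,v}}))"
    "\<forall>i. Suc i < length p \<longrightarrow> adj (E - {{u,v}}) (p ! i) (p ! Suc i)"
    by (rule rtranclp_adj_obtains_path)
  have graph: "\<forall>e\<in>E. \<exists>x y. x \<noteq> y \<and> x \<in> V \<and> y \<in> V \<and> e = {x, y}"
    using assms(1) by (simp add: is_tree_def is_graph_def)
  then have "u \<noteq> v" "u \<in> V" "\<Union>E \<subseteq> V" using assms(2) by (fastforce simp: doubleton_eq_iff)+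
  then have "set p \<subseteq> V" using p(5) by blast
  have "length p \<noteq> 1" using p(1-3) \<open>u \<noteq> v\<close> by (metis One_nat_def last_conv_nth hd_conv_nth diff_Suc_1 length_0_conv)
  moreover have "length p \<noteq> 2"
  proof
    assume "length p = 2"
    then have "adj (E - {{u,v}}) u v" using p(1-3,6) by (auto simp: hd_conv_nth last_conv_nth)
    then show False by (simp add: adj_def)
  qed
  moreover have "length p \<noteq> 0" using p(1) by simp
  ultimately have "length p \<ge> 3" by linarith
  moreover have "adj E (last p) (hd p)" using p(2,3) assms(2) by (simp add: adj_def insert_commute)
  ultimately have "is_cycle V E p"
    using p(4,6) \<open>set p \<subseteq> V\<close> unfolding is_cycle_def adj_def by blast
  then show False using assms(1) by (auto simp: is_tree_def acyclic_graph_def)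
qed

theorem lemma2p4:
  fixes V :: "'a set" and E :: "'a set set" and u v :: 'a
  assumes "is_tree V E" and "{u, v} \<in> E"
  shows "int (nu2 E) - int (nu2 (E - {{u, v}})) \<in> {0, 1}
    \<and> (int (nu2 E) - int (nu2 (E - {{u, v}})) = 0 \<longleftrightarrow>
         saturated_vertex (E - {{u, v}}) u \<or> saturated_vertex (E - {{u, v}}) v)
    \<and> (int (nu2 E) - int (nu2 (E - {{u, v}})) = 1 \<longleftrightarrow> saturated_edge E {u, v})"
proof -
  have graph: "is_graph V E" using assms(1) by (simp add: is_tree_def)
  then have fin: "finite E" by (rule is_graph_finite_edges)
  have "\<forall>f\<in>E. \<exists>x y. f = {x,y}" using graph unfolding is_graph_def by blast
  note drop_iff = bridge_nu2_Diff_less_iff[OF fin this assms(2) tree_edge_is_bridge[OF assms]]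
  have "nu2 (E - {{u,v}}) \<le> nu2 E" "nu2 E \<le> Suc (nu2 (E - {{u,v}}))"
    using nu2_mono[OF fin] nu2_le_nu2_Diff_Suc[OF fin] by auto
  then consider "nu2 E = nu2 (E - {{u,v}})" | "nu2 E = Suc (nu2 (E - {{u,v}}))" by linarith
  then show ?thesis
    using drop_iff saturated_edge_iff_nu2_Diff_less[OF fin, of "{u,v}"] by cases simp_all
qed

end
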